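(* Let $(V,g)$ be a Euclidean vector space of dimension $n\ge3$, $N=\frac{(n-1)(n+2)}{2}$. (1) If $1\le\alpha_1\le\alpha_2<N$ and $\theta>-1$, then $\mathcal{C}(\alpha_1,\theta)\subset\mathcal{C}(\alpha_2,\theta)$. (2) If $\alpha\in[1,N)$ and $-1<\theta_1\le\theta_2$, then $\mathcal{C}(\alpha,\theta_1)\subset\mathcal{C}(\alpha,\theta_2)$.
   Context: $S^2_0(V)$ is the space of traceless symmetric two-tensors on $V$ (dimension $N$). For a symmetric operator on $S^2_0(V)$ with eigenvalues $\lambda_1\le\cdots\le\lambda_N$ and average $\bar\lambda$, write $\lambda_1+\cdots+\lambda_\alpha:=\lambda_1+\cdots+\lambda_{[\alpha]}+(\alpha-[\alpha])\lambda_{[\alpha]+1}$; $\mathcal{C}(\alpha,\theta)$ is the cone of symmetric operators on $S^2_0(V)$ with $\alpha^{-1}(\lambda_1+\cdots+\lambda_\alpha)\ge-\theta\bar\lambda$. (In the paper these cones are considered for operators $\mathring{R}$ induced by algebraic curvature tensors.) *)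

theory Defs
  imports "Jordan_Normal_Form.Char_Poly" "HOL-Library.Multiset"
begin

text \<open>A symmetric operator on the N-dimensional Euclidean space S^2_0(V) is represented by
  its (real, symmetric) N x N matrix with respect to an orthonormal basis.\<close>

definition sym_op :: "nat \<Rightarrow> real mat \<Rightarrow> bool" where
  "sym_op N A \<longleftrightarrow> A \<in> carrier_mat N N \<and> transpose_mat A = A"

text \<open>Eigenvalues (with multiplicity) in increasing order: lambda_1 <= ... <= lambda_N
  is the list at positions 0, ..., N-1.\<close>

definition eigs :: "real mat \<Rightarrow> real list" where
  "eigs A = sorted_list_of_multiset (proots (char_poly A))"

definition partial_eig_sum :: "real mat \<Rightarrow> real \<Rightarrow> real" where
  "partial_eig_sum A \<alpha> =
     (\<Sum>i<nat \<lfloor>\<alpha>\<rfloor>. eigs A ! i) + (\<alpha> - of_int \<lfloor>\<alpha>\<rfloor>) * eigs A ! nat \<lfloor>\<alpha>\<rfloor>"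

definition avg_eig :: "nat \<Rightarrow> real mat \<Rightarrow> real" where
  "avg_eig N A = (\<Sum>i<N. eigs A ! i) / real N"

definition cone :: "nat \<Rightarrow> real \<Rightarrow> real \<Rightarrow> real mat set" where
  "cone N \<alpha> \<theta> = {A. sym_op N A \<and> partial_eig_sum A \<alpha> / \<alpha> \<ge> - \<theta> * avg_eig N A}"

end

theory Submission
  imports Defs
begin

(* A real symmetric matrix has only real eigenvalues, so its characteristic polynomial splits
   over the reals and the sorted eigenvalue list has exactly N entries. The function
   alpha |-> lambda_1 + ... + lambda_alpha is piecewise linear with nondecreasing slopes and
   vanishes at 0, hence convex; so the averages (lambda_1 + ... + lambda_alpha) / alpha are
   nondecreasing on (0, N], and at alpha = N they equal the mean eigenvalue. This gives (1), for
   every theta. For (2), comparing with alpha = N shows that every member of C(alpha, theta)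
   satisfies -theta * mean <= mean, which for theta > -1 forces mean >= 0; and then
   -theta * mean decreases in theta. *)

lemma eigenvalue_of_real_symmetric_in_Reals:
  fixes A :: "real mat"
  assumes A: "A \<in> carrier_mat n n" and sym: "transpose_mat A = A"
    and ev: "eigenvalue (map_mat complex_of_real A) a"
  shows "a \<in> \<real>"
proof -
  let ?B = "map_mat complex_of_real A"
  obtain v where v: "v \<in> carrier_vec n" "v \<noteq> 0\<^sub>v n" "?B *\<^sub>v v = a \<cdot>\<^sub>v v"
    using ev A unfolding eigenvalue_def eigenvector_def by auto
  have A_sym: "A $$ (i, j) = A $$ (j, i)" if "i < n" "j < n" for i j
    using sym A that by (metis carrier_matD index_transpose_mat(1))
  \<comment> \<open>\<open>s = v\<^sup>* B v\<close> is real because \<open>B\<close> is real symmetric, and equals \<open>a |v|\<^sup>2\<close>.\<close>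
  define s where "s = (\<Sum>i<n. cnj (v $ i) * (?B *\<^sub>v v) $ i)"
  have s_double_sum: "s = (\<Sum>i<n. \<Sum>j<n. cnj (v $ i) * of_real (A $$ (i, j)) * v $ j)"
    unfolding s_def using A v(1)
    by (auto simp: scalar_prod_def sum_distrib_left mult.assoc intro!: sum.cong)
  have "cnj s = (\<Sum>i<n. \<Sum>j<n. v $ i * of_real (A $$ (i, j)) * cnj (v $ j))"
    unfolding s_double_sum by (simp add: cnj_sum)
  also have "\<dots> = (\<Sum>j<n. \<Sum>i<n. v $ i * of_real (A $$ (i, j)) * cnj (v $ j))"
    by (rule sum.swap)
  also have "\<dots> = s"
    unfolding s_double_sum
    by (intro sum.cong refl) (simp add: A_sym mult.commute mult.left_commute)
  finally have s_real: "cnj s = s" .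
  define r where "r = (\<Sum>i<n. (cmod (v $ i))\<^sup>2)"
  have s_eq: "s = a * of_real r"
    unfolding s_def r_def of_real_sum using v(1,3)
    by (auto simp: sum_distrib_left complex_norm_square mult_ac simp del: of_real_power
        intro!: sum.cong)
  obtain i where "i < n" "v $ i \<noteq> 0"
    using v(1,2) by (metis eq_vecI carrier_vecD index_zero_vec(1,2))
  then have "r > 0"
    unfolding r_def by (intro sum_pos2[of _ i]) auto
  with s_real have "cnj a = a"
    unfolding s_eq by simp
  then show ?thesis
    by (simp add: Reals_cnj_iff)
qed

lemma proots_prod_linear_factors:
  "proots (\<Prod>r\<leftarrow>rs. [:- r, 1:]) = mset (rs :: 'a :: idom list)"
proof (induction rs)
  case (Cons r rs)
  have "(\<Prod>r\<leftarrow>rs. [:- r, 1:]) \<noteq> (0 :: 'a poly)"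
    by (auto simp: prod_list_zero_iff)
  then have "proots ([:- r, 1:] * (\<Prod>r\<leftarrow>rs. [:- r, 1:])) =
      proots [:- r, 1:] + proots (\<Prod>r\<leftarrow>rs. [:- r, 1:])"
    by (intro proots_mult) simp_all
  then show ?case
    using Cons.IH by simp
qed simp

lemma char_poly_real_symmetric_splits:
  fixes A :: "real mat"
  assumes A: "A \<in> carrier_mat n n" and sym: "transpose_mat A = A"
  obtains rs where "length rs = n" "char_poly A = (\<Prod>r\<leftarrow>rs. [:- r, 1:])"
proof -
  let ?B = "map_mat complex_of_real A"
  have B: "?B \<in> carrier_mat n n"
    using A by simp
  obtain as where as: "char_poly ?B = (\<Prod>a\<leftarrow>as. [:- a, 1:])" "length as = n"
    using char_poly_factorized[OF B] by blast
  have as_real: "of_real (Re a) = a" if "a \<in> set as" for a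
  proof -
    have "poly (char_poly ?B) a = 0"
      unfolding as(1) using that by (simp add: poly_prod_list prod_list_zero_iff)
    then have "eigenvalue ?B a"
      using eigenvalue_root_char_poly[OF B] by simp
    then show ?thesis
      using eigenvalue_of_real_symmetric_in_Reals[OF A sym] by (simp add: of_real_Re)
  qed
  interpret of_real_poly: map_poly_inj_idom_hom "of_real :: real \<Rightarrow> complex" ..
  have "map_poly of_real (char_poly A) = char_poly ?B"
    by (rule of_real_hom.char_poly_hom[OF A, symmetric])
  also have "\<dots> = (\<Prod>a\<leftarrow>as. [:- a, 1:])"
    by (rule as(1))
  also have "\<dots> = map_poly of_real (\<Prod>r\<leftarrow>map Re as. [:- r, 1:])"
    using as_real by (simp add: of_real_poly.hom_prod_list o_def cong: map_cong)
  finally have "char_poly A = (\<Prod>r\<leftarrow>map Re as. [:- r, 1:])"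
    by (simp add: of_real_poly.eq_iff)
  with as(2) show ?thesis
    by (intro that[of "map Re as"]) simp_all
qed

lemma length_eigs:
  assumes "sym_op n A"
  shows "length (eigs A) = n"
proof -
  have "A \<in> carrier_mat n n" "transpose_mat A = A"
    using assms unfolding sym_op_def by auto
  then obtain rs where rs: "length rs = n" "char_poly A = (\<Prod>r\<leftarrow>rs. [:- r, 1:])"
    by (rule char_poly_real_symmetric_splits)
  then show ?thesis
    unfolding eigs_def rs(2) proots_prod_linear_factors by simp
qed

definition frac_prefix_sum :: "real list \<Rightarrow> real \<Rightarrow> real" where
  "frac_prefix_sum l \<alpha> = (\<Sum>i<nat \<lfloor>\<alpha>\<rfloor>. l ! i) + (\<alpha> - of_int \<lfloor>\<alpha>\<rfloor>) * l ! nat \<lfloor>\<alpha>\<rfloor>"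

lemma frac_prefix_sum_le:
  fixes a :: real
  assumes "sorted l" "0 \<le> a" "a < length l"
  shows "frac_prefix_sum l a \<le> a * l ! nat \<lfloor>a\<rfloor>"
proof -
  define k where "k = nat \<lfloor>a\<rfloor>"
  have floor_a: "of_int \<lfloor>a\<rfloor> = real k"
    unfolding k_def using assms(2) by simp
  have "k < length l"
    using assms(2,3) floor_a by linarith
  then have "(\<Sum>i<k. l ! i) \<le> (\<Sum>i<k. l ! k)"
    using assms(1) by (intro sum_mono sorted_nth_mono) auto
  then show ?thesis
    unfolding frac_prefix_sum_def k_def[symmetric] floor_a by (simp add: algebra_simps)
qed

lemma frac_prefix_sum_increment_ge:
  fixes a b :: real
  assumes "sorted l" "0 \<le> a" "a \<le> b" "b \<le> length l"
  shows "(b - a) * l ! nat \<lfloor>a\<rfloor> \<le> frac_prefix_sum l b - frac_prefix_sum l a"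
proof -
  define k m where "k = nat \<lfloor>a\<rfloor>" and "m = nat \<lfloor>b\<rfloor>"
  define c where "c = l ! k"
  have floor_a: "of_int \<lfloor>a\<rfloor> = real k" and floor_b: "of_int \<lfloor>b\<rfloor> = real m"
    unfolding k_def m_def using assms(2,3) by simp_all
  have "k \<le> m" "m \<le> length l"
    unfolding k_def m_def using assms(3,4) floor_b by (simp_all add: floor_mono nat_mono, linarith)
  have "(\<Sum>i\<in>{k..<m}. c) \<le> (\<Sum>i\<in>{k..<m}. l ! i)"
    unfolding c_def using assms(1) \<open>m \<le> length l\<close> by (intro sum_mono sorted_nth_mono) auto
  then have middle: "(real m - real k) * c \<le> (\<Sum>i\<in>{k..<m}. l ! i)"
    using \<open>k \<le> m\<close> by (simp add: of_nat_diff)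
  have last: "(b - real m) * c \<le> (b - real m) * l ! m"
  proof (cases "m < length l")
    case True
    then show ?thesis
      unfolding c_def using assms(1) \<open>k \<le> m\<close> floor_b
      by (intro mult_left_mono sorted_nth_mono) linarith+
  next
    case False
    then have "b = real m"
      using assms(4) floor_b by linarith
    then show ?thesis by simp
  qed
  have "(\<Sum>i<m. l ! i) = (\<Sum>i<k. l ! i) + (\<Sum>i\<in>{k..<m}. l ! i)"
    using \<open>k \<le> m\<close> by (metis sum.atLeastLessThan_concat zero_le lessThan_atLeast0)
  then have "frac_prefix_sum l b - frac_prefix_sum l a =
      (\<Sum>i\<in>{k..<m}. l ! i) + (b - real m) * l ! m - (a - real k) * c"
    unfolding frac_prefix_sum_def k_def[symmetric] m_def[symmetric] c_def floor_a floor_b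
    by simp
  with middle last show ?thesis
    unfolding k_def[symmetric] c_def[symmetric] by (simp add: algebra_simps)
qed

lemma frac_prefix_sum_div_mono:
  fixes a b :: real
  assumes "sorted l" "0 < a" "a \<le> b" "b \<le> length l"
  shows "frac_prefix_sum l a / a \<le> frac_prefix_sum l b / b"
proof (cases "a = b")
  case False
  \<comment> \<open>\<open>c\<close> separates the two averages: \<open>S a / a \<le> c \<le> (S b - S a) / (b - a)\<close>.\<close>
  define c where "c = l ! nat \<lfloor>a\<rfloor>"
  have "frac_prefix_sum l a \<le> a * c"
    unfolding c_def using assms False by (intro frac_prefix_sum_le) auto
  with assms(3) have "(b - a) * frac_prefix_sum l a \<le> a * ((b - a) * c)"
    by (metis diff_ge_0_iff_ge mult.left_commute mult_left_mono)
  also have "\<dots> \<le> a * (frac_prefix_sum l b - frac_prefix_sum l a)"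
    unfolding c_def using assms by (intro mult_left_mono frac_prefix_sum_increment_ge) auto
  finally have "b * frac_prefix_sum l a \<le> a * frac_prefix_sum l b"
    by (simp add: algebra_simps)
  then show ?thesis
    using assms(2,3) by (simp add: divide_simps mult.commute)
qed simp

lemma partial_eig_sum_div_mono:
  assumes "sym_op N A" "0 < \<alpha>1" "\<alpha>1 \<le> \<alpha>2" "\<alpha>2 \<le> real N"
  shows "partial_eig_sum A \<alpha>1 / \<alpha>1 \<le> partial_eig_sum A \<alpha>2 / \<alpha>2"
proof -
  have "sorted (eigs A)"
    unfolding eigs_def by simp
  moreover have "partial_eig_sum A = frac_prefix_sum (eigs A)"
    by (simp add: fun_eq_iff partial_eig_sum_def frac_prefix_sum_def)
  ultimately show ?thesis
    using frac_prefix_sum_div_mono length_eigs[OF assms(1)] assms(2-4) by simp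
qed

lemma avg_eig_eq_partial_eig_sum: "avg_eig N A = partial_eig_sum A (real N) / real N"
  by (simp add: avg_eig_def partial_eig_sum_def)

lemma cone_mono_alpha:
  assumes "0 < \<alpha>1" "\<alpha>1 \<le> \<alpha>2" "\<alpha>2 \<le> real N"
  shows "cone N \<alpha>1 \<theta> \<subseteq> cone N \<alpha>2 \<theta>"
  using partial_eig_sum_div_mono[OF _ assms] unfolding cone_def by force

lemma avg_eig_nonneg_if_mem_cone:
  assumes A: "A \<in> cone N \<alpha> \<theta>" and "-1 < \<theta>" "0 < \<alpha>" "\<alpha> \<le> real N"
  shows "0 \<le> avg_eig N A"
proof (rule ccontr)
  assume negative: "\<not> 0 \<le> avg_eig N A"
  have "- \<theta> * avg_eig N A \<le> partial_eig_sum A \<alpha> / \<alpha>"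
    using A unfolding cone_def by simp
  also have "\<dots> \<le> avg_eig N A"
    using A partial_eig_sum_div_mono[OF _ assms(3,4) order_refl]
    unfolding cone_def avg_eig_eq_partial_eig_sum by simp
  finally have "0 \<le> (\<theta> + 1) * avg_eig N A"
    by (simp add: algebra_simps)
  with negative \<open>-1 < \<theta>\<close> show False
    by (simp add: zero_le_mult_iff)
qed

lemma cone_mono_theta:
  assumes "-1 < \<theta>1" "\<theta>1 \<le> \<theta>2" "0 < \<alpha>" "\<alpha> \<le> real N"
  shows "cone N \<alpha> \<theta>1 \<subseteq> cone N \<alpha> \<theta>2"
proof
  fix A
  assume A: "A \<in> cone N \<alpha> \<theta>1"
  have "- \<theta>2 * avg_eig N A \<le> - \<theta>1 * avg_eig N A"
    using avg_eig_nonneg_if_mem_cone[OF A assms(1,3,4)] assms(2) by (simp add: mult_right_mono)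
  with A show "A \<in> cone N \<alpha> \<theta>2"
    unfolding cone_def by auto
qed

theorem proposition2p8:
  fixes n N :: nat
  assumes "n \<ge> 3"
    and "N = (n - 1) * (n + 2) div 2"
  shows "(\<forall>\<alpha>1 \<alpha>2 \<theta> :: real. 1 \<le> \<alpha>1 \<and> \<alpha>1 \<le> \<alpha>2 \<and> \<alpha>2 < real N \<and> \<theta> > -1
            \<longrightarrow> cone N \<alpha>1 \<theta> \<subseteq> cone N \<alpha>2 \<theta>)
       \<and> (\<forall>\<alpha> \<theta>1 \<theta>2 :: real. 1 \<le> \<alpha> \<and> \<alpha> < real N \<and> -1 < \<theta>1 \<and> \<theta>1 \<le> \<theta>2
            \<longrightarrow> cone N \<alpha> \<theta>1 \<subseteq> cone N \<alpha> \<theta>2)"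
  \<comment> \<open>The inclusions hold for every \<open>N\<close>.\<close>
proof (intro conjI allI impI)
  fix \<alpha>1 \<alpha>2 \<theta> :: real
  assume "1 \<le> \<alpha>1 \<and> \<alpha>1 \<le> \<alpha>2 \<and> \<alpha>2 < real N \<and> \<theta> > -1"
  then show "cone N \<alpha>1 \<theta> \<subseteq> cone N \<alpha>2 \<theta>"
    by (intro cone_mono_alpha) auto
next
  fix \<alpha> \<theta>1 \<theta>2 :: real
  assume "1 \<le> \<alpha> \<and> \<alpha> < real N \<and> -1 < \<theta>1 \<and> \<theta>1 \<le> \<theta>2"
  then show "cone N \<alpha> \<theta>1 \<subseteq> cone N \<alpha> \<theta>2"
    by (intro cone_mono_theta) auto
qed

end
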